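(* Let $n\geq 0$ be an integer. If $n<\max\{t_1,t_2,t_3\}$ or $n+1\geq t_1+t_2+t_3$, then $\dim_{\mathbb C}\mathscr M_n=2(n+1)$.
   Context: Fix real numbers $k_1,k_2,k_3$. For $i=1,2,3$ let $R_i$ be the operator on functions on $\mathbb R^3$ replacing $x_i$ by $-x_i$, and let $T_i$ be the Dunkl operator $T_if=\frac{\partial f}{\partial x_i}+k_i\frac{f-R_if}{x_i}$. Let $\sigma_1=\begin{pmatrix}0&1\\1&0\end{pmatrix}$, $\sigma_2=\begin{pmatrix}0&-\sqrt{-1}\\ \sqrt{-1}&0\end{pmatrix}$, $\sigma_3=\begin{pmatrix}1&0\\0&-1\end{pmatrix}$, and let $e_i$ act on $\mathbb C^2$ by $\sigma_i$ (a representation of the Clifford algebra of $\mathbb R^3$). Tensor products are over $\mathbb R$; $\mathbb R[x_1,x_2,x_3]_n$ denotes the homogeneous polynomials of degree $n$. The Dirac–Dunkl operator is $\mathbf D=e_1\otimes T_1+e_2\otimes T_2+e_3\otimes T_3$ acting on $\mathbb C^2\otimes\mathbb R[x_1,x_2,x_3]$, and $\mathscr M_n=\ker\big(\mathbf D|_{\mathbb C^2\otimes\mathbb R[x_1,x_2,x_3]_n}\big)$, a complex vector space. For $i=1,2,3$ set $t_i=-2k_i$ if $2k_i$ is an odd negative integer, and $t_i=\infty$ otherwise (with the usual conventions for sums and comparisons involving $\infty$). *)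

theory Defs
  imports "HOL-Analysis.Analysis" "HOL-Library.Extended_Nat" "HOL-Library.Function_Algebras" "HOL-Library.Product_Plus"
begin

(* A complex-coefficient polynomial in x1,x2,x3 is given by its coefficient function on
   exponent triples (a,b,c) (coefficient of x1^a x2^b x3^c).  C^2 (x)_R R[x1,x2,x3]
   = C^2-valued polynomials with complex coefficients = pairs of such polynomials. *)
type_synonym cpoly = "nat \<times> nat \<times> nat \<Rightarrow> complex"

definition homog :: "nat \<Rightarrow> cpoly \<Rightarrow> bool" where
  "homog n p \<longleftrightarrow> (\<forall>a b c. p (a, b, c) \<noteq> 0 \<longrightarrow> a + b + c = n)"

(* Dunkl operators: T_i x^m = m_i x^{m-e_i} + k_i (1 - (-1)^{m_i}) x^{m-e_i},
   since (x_i^{m_i} - (-x_i)^{m_i}) / x_i = (1 - (-1)^{m_i}) x_i^{m_i - 1}. *)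
definition dunkl1 :: "real \<Rightarrow> cpoly \<Rightarrow> cpoly" where
  "dunkl1 k p = (\<lambda>(a, b, c). (of_nat (a + 1) + of_real k * (1 - (-1) ^ (a + 1))) * p (a + 1, b, c))"
definition dunkl2 :: "real \<Rightarrow> cpoly \<Rightarrow> cpoly" where
  "dunkl2 k p = (\<lambda>(a, b, c). (of_nat (b + 1) + of_real k * (1 - (-1) ^ (b + 1))) * p (a, b + 1, c))"
definition dunkl3 :: "real \<Rightarrow> cpoly \<Rightarrow> cpoly" where
  "dunkl3 k p = (\<lambda>(a, b, c). (of_nat (c + 1) + of_real k * (1 - (-1) ^ (c + 1))) * p (a, b, c + 1))"

definition pauli1 :: "cpoly \<times> cpoly \<Rightarrow> cpoly \<times> cpoly" where
  "pauli1 = (\<lambda>(u, v). (v, u))"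
definition pauli2 :: "cpoly \<times> cpoly \<Rightarrow> cpoly \<times> cpoly" where
  "pauli2 = (\<lambda>(u, v). ((\<lambda>m. - \<i> * v m), (\<lambda>m. \<i> * u m)))"
definition pauli3 :: "cpoly \<times> cpoly \<Rightarrow> cpoly \<times> cpoly" where
  "pauli3 = (\<lambda>(u, v). (u, (\<lambda>m. - v m)))"

definition addS :: "cpoly \<times> cpoly \<Rightarrow> cpoly \<times> cpoly \<Rightarrow> cpoly \<times> cpoly" where
  "addS f g = ((\<lambda>m. fst f m + fst g m), (\<lambda>m. snd f m + snd g m))"

definition scaleS :: "complex \<Rightarrow> cpoly \<times> cpoly \<Rightarrow> cpoly \<times> cpoly" where
  "scaleS c f = ((\<lambda>m. c * fst f m), (\<lambda>m. c * snd f m))"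

definition dirac_dunkl :: "real \<Rightarrow> real \<Rightarrow> real \<Rightarrow> cpoly \<times> cpoly \<Rightarrow> cpoly \<times> cpoly" where
  "dirac_dunkl k1 k2 k3 f =
     addS (pauli1 (dunkl1 k1 (fst f), dunkl1 k1 (snd f)))
      (addS (pauli2 (dunkl2 k2 (fst f), dunkl2 k2 (snd f)))
            (pauli3 (dunkl3 k3 (fst f), dunkl3 k3 (snd f))))"

definition monogenics :: "real \<Rightarrow> real \<Rightarrow> real \<Rightarrow> nat \<Rightarrow> (cpoly \<times> cpoly) set" where
  "monogenics k1 k2 k3 n =
     {f. homog n (fst f) \<and> homog n (snd f) \<and> dirac_dunkl k1 k2 k3 f = ((\<lambda>_. 0), (\<lambda>_. 0))}"

definition tpar :: "real \<Rightarrow> enat" where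
  "tpar k = (if \<exists>m::nat. odd m \<and> 2 * k = - real m then enat (THE m::nat. 2 * k = - real m) else \<infinity>)"

end

theory Submission
  imports Defs
begin

(* In coefficients, the equation D f = 0 at a monomial x^r of degree n - 1 (a "row")
   involves only the coefficients of f at the three monomials x^r x_j, each multiplied by the
   Dunkl factor (e_j + 1) + k_j (1 - (-1)^(e_j + 1)), e_j the exponent of x_j in x^r; this factor
   vanishes exactly when e_j + 1 = t_j.  Under either hypothesis every row can be given a pivot
   direction j with nonvanishing factor (the same j for all rows if n < t_j; otherwise the first
   of x_1, x_2 whose exponent is already past its threshold, else x_3, which then cannot hit its
   threshold since t_1 + t_2 + t_3 <= n + 1) in such a way that the system becomes triangular
   for a suitable layering of the rows.  So the coefficients of both components at the n + 1
   degree-n monomials that are not pivots can be prescribed arbitrarily and determine a unique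
   monogenic polynomial, whence dim M_n = 2 (n + 1). *)

lemma (in vector_space) independent_if_separated:
  assumes "\<And>b. b \<in> B \<Longrightarrow> \<exists>W. subspace W \<and> B - {b} \<subseteq> W \<and> b \<notin> W"
  shows "independent B"
  unfolding dependent_def
  by (metis assms span_minimal subsetD)

lemma (in vector_space_pair) dim_image_eq_of_inj_on:
  assumes "Vector_Spaces.linear s1 s2 f" "inj_on f (vs1.span S)"
  shows "vs2.dim (f ` S) = vs1.dim S"
proof -
  interpret f: Vector_Spaces.linear s1 s2 f
    by (rule assms(1))
  obtain B where B: "B \<subseteq> S" "vs1.independent B" "S \<subseteq> vs1.span B" "card B = vs1.dim S"
    using vs1.basis_exists by blast
  then have span_B: "vs1.span B = vs1.span S"
    by (metis vs1.span_mono vs1.span_span subset_antisym)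
  have "vs2.independent (f ` B)"
    using assms(2) B(2) f.dependent_inj_imageD span_B by auto
  moreover have "f ` S \<subseteq> vs2.span (f ` B)"
    using B(3) f.span_image by auto
  moreover have "card (f ` B) = card B"
    using assms(2) B(1) vs1.span_superset by (intro card_image) (auto intro: inj_on_subset)
  ultimately show ?thesis
    by (metis B(1,4) image_mono vs2.dim_unique)
qed

datatype axis = X1 | X2 | X3

type_synonym mexp = "nat \<times> nat \<times> nat"

fun expo :: "axis \<Rightarrow> mexp \<Rightarrow> nat" where
  "expo X1 (a, b, c) = a"
| "expo X2 (a, b, c) = b"
| "expo X3 (a, b, c) = c"

fun raise :: "axis \<Rightarrow> mexp \<Rightarrow> mexp" where
  "raise X1 (a, b, c) = (a + 1, b, c)"
| "raise X2 (a, b, c) = (a, b + 1, c)"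
| "raise X3 (a, b, c) = (a, b, c + 1)"

fun mdegree :: "mexp \<Rightarrow> nat" where
  "mdegree (a, b, c) = a + b + c"

lemma mdegree_eq_sum_expo: "mdegree r = expo X1 r + expo X2 r + expo X3 r"
  by (cases r) simp

lemma expo_le_mdegree: "expo i r \<le> mdegree r"
  by (cases i; cases r) auto

lemma mdegree_raise [simp]: "mdegree (raise j r) = mdegree r + 1"
  by (cases j; cases r) auto

lemma expo_raise: "expo i (raise j r) = expo i r + (if i = j then 1 else 0)"
  by (cases i; cases j; cases r) auto

lemma mexp_eqI: "(\<And>i. expo i r = expo i r') \<Longrightarrow> r = r'"
  by (cases r; cases r') (metis expo.simps)

lemma raise_eq_raise_iff:
  "raise j r = raise d r'
     \<longleftrightarrow> (\<forall>i. expo i r + (if i = j then 1 else 0) = expo i r' + (if i = d then 1 else 0))"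
  by (metis expo_raise mexp_eqI)

lemma raise_inj: "raise j r = raise d r' \<Longrightarrow> j = d \<longleftrightarrow> r = r'"
  by (cases j; cases d; cases r; cases r') auto

lemma expo_of_raise_eq_raise:
  assumes "raise j r = raise d r'" "j \<noteq> d"
  shows "expo d r = expo d r' + 1" "i \<noteq> d \<Longrightarrow> expo i r \<le> expo i r'"
proof -
  have "expo i r + (if i = j then 1 else 0) = expo i r' + (if i = d then 1 else 0)" for i
    using assms(1) raise_eq_raise_iff by blast
  from this[of d] this[of i] assms(2)
  show "expo d r = expo d r' + 1" "i \<noteq> d \<Longrightarrow> expo i r \<le> expo i r'"
    by (simp_all split: if_splits)
qed

lemma finite_mdegree_eq: "finite {r. mdegree r = m}"
  by (rule finite_subset[of _ "{0..m} \<times> {0..m} \<times> {0..m}"]) auto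

lemma card_mdegree_eq: "card {r. mdegree r = n} = n + 1 + card {r. mdegree r + 1 = n}"
proof -
  let ?A = "(\<lambda>b. (0, b, n - b)) ` {0..n}"
  let ?B = "raise X1 ` {r. mdegree r + 1 = n}"
  have "{r. mdegree r = n} = ?A \<union> ?B"
  proof (intro set_eqI iffI)
    fix r :: mexp
    assume "r \<in> {r. mdegree r = n}"
    moreover obtain a b c where "r = (a, b, c)"
      by (cases r)
    ultimately show "r \<in> ?A \<union> ?B"
      by (cases a) (auto simp: image_iff intro!: bexI[of _ "(a - 1, b, c)"])
  qed auto
  moreover have "card ?A = n + 1"
    by (subst card_image) (auto simp: inj_on_def)
  moreover have "card ?B = card {r. mdegree r + 1 = n}"
    by (rule card_image) (auto simp: inj_on_def dest: raise_inj)
  moreover have "?A \<inter> ?B = {}"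
    using expo_raise[of X1 X1] by fastforce
  moreover have "finite {r. mdegree r + 1 = n}"
    using finite_mdegree_eq[of "n - 1"] by (rule finite_subset[rotated]) auto
  ultimately show ?thesis
    by (simp add: card_Un_disjoint)
qed

section \<open>Dunkl factors and their thresholds\<close>

definition dunkl_factor :: "real \<Rightarrow> nat \<Rightarrow> complex" where
  "dunkl_factor \<kappa> m = of_nat m + of_real \<kappa> * (1 - (-1) ^ m)"

lemma tpar_eq_enat_iff: "tpar \<kappa> = enat m \<longleftrightarrow> odd m \<and> 2 * \<kappa> = - real m"
proof (cases "\<exists>m'::nat. odd m' \<and> 2 * \<kappa> = - real m'")
  case True
  then obtain m' :: nat where m': "odd m'" "2 * \<kappa> = - real m'"
    by blast
  then have "(THE m::nat. 2 * \<kappa> = - real m) = m'"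
    by (intro the_equality) auto
  with m' show ?thesis
    by (auto simp: tpar_def)
qed (auto simp: tpar_def)

lemma dunkl_factor_eq_0_iff:
  assumes "m \<ge> 1"
  shows "dunkl_factor \<kappa> m = 0 \<longleftrightarrow> tpar \<kappa> = enat m"
proof (cases "even m")
  case True
  then show ?thesis
    using assms by (simp add: dunkl_factor_def tpar_eq_enat_iff)
next
  case False
  then have "dunkl_factor \<kappa> m = of_real (real m + 2 * \<kappa>)"
    by (simp add: dunkl_factor_def)
  then have "dunkl_factor \<kappa> m = 0 \<longleftrightarrow> real m + 2 * \<kappa> = 0"
    by (metis of_real_eq_0_iff)
  with False show ?thesis
    by (auto simp: tpar_eq_enat_iff)
qed

fun multiplicity_fn :: "real \<Rightarrow> real \<Rightarrow> real \<Rightarrow> axis \<Rightarrow> real" where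
  "multiplicity_fn k1 k2 k3 X1 = k1"
| "multiplicity_fn k1 k2 k3 X2 = k2"
| "multiplicity_fn k1 k2 k3 X3 = k3"

definition dunkl_coeff :: "(axis \<Rightarrow> real) \<Rightarrow> axis \<Rightarrow> mexp \<Rightarrow> complex" where
  "dunkl_coeff k j r = dunkl_factor (k j) (expo j r + 1)"

lemma dunkl_coeff_eq_0_iff: "dunkl_coeff k j r = 0 \<longleftrightarrow> tpar (k j) = enat (expo j r + 1)"
  by (simp add: dunkl_coeff_def dunkl_factor_eq_0_iff)

lemma thresholds_not_all_hit:
  assumes "t X1 + t X2 + t X3 \<le> enat (n + 1)" "mdegree r + 1 = n"
    and "enat (expo X1 r) < t X1" "enat (expo X2 r) < t X2"
  shows "t X3 \<noteq> enat (expo X3 r + 1)"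
proof
  assume hit: "t X3 = enat (expo X3 r + 1)"
  have "enat (expo X1 r + 1) \<le> t X1" "enat (expo X2 r + 1) \<le> t X2"
    using assms(3,4) by (simp_all add: Suc_ile_eq)
  then have "enat (expo X1 r + 1) + enat (expo X2 r + 1) + enat (expo X3 r + 1) \<le> t X1 + t X2 + t X3"
    unfolding hit by (intro add_mono) simp_all
  also have "\<dots> \<le> enat (n + 1)"
    by (rule assms(1))
  finally show False
    using assms(2) by (simp add: mdegree_eq_sum_expo)
qed

interpretation spinor: vector_space scaleS
  by unfold_locales (auto simp: scaleS_def algebra_simps fun_eq_iff)

interpretation spinor_pair: vector_space_pair scaleS scaleS ..

lemma fst_scaleS [simp]: "fst (scaleS c f) = (\<lambda>p. c * fst f p)"
  and snd_scaleS [simp]: "snd (scaleS c f) = (\<lambda>p. c * snd f p)"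
  by (simp_all add: scaleS_def)

definition supported :: "mexp set \<Rightarrow> (cpoly \<times> cpoly) set" where
  "supported S = {f. \<forall>p. p \<notin> S \<longrightarrow> fst f p = 0 \<and> snd f p = 0}"

lemma supportedD: "f \<in> supported S \<Longrightarrow> p \<notin> S \<Longrightarrow> fst f p = 0 \<and> snd f p = 0"
  unfolding supported_def by blast

lemma subspace_supported: "spinor.subspace (supported S)"
  by (simp add: spinor.subspace_def supported_def)

definition unit_fst :: "mexp \<Rightarrow> cpoly \<times> cpoly" where
  "unit_fst p = ((\<lambda>q. if q = p then 1 else 0), (\<lambda>_. 0))"

definition unit_snd :: "mexp \<Rightarrow> cpoly \<times> cpoly" where
  "unit_snd p = ((\<lambda>_. 0), (\<lambda>q. if q = p then 1 else 0))"

lemma unit_apply [simp]: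
  "fst (unit_fst p) q = (if q = p then 1 else 0)" "snd (unit_fst p) q = 0"
  "fst (unit_snd p) q = 0" "snd (unit_snd p) q = (if q = p then 1 else 0)"
  by (simp_all add: unit_fst_def unit_snd_def)

lemma unit_eq_iff [simp]:
  "unit_fst p = unit_fst q \<longleftrightarrow> p = q" "unit_snd p = unit_snd q \<longleftrightarrow> p = q"
  "unit_fst p \<noteq> unit_snd q" "unit_snd q \<noteq> unit_fst p"
  by (metis unit_apply(1) zero_neq_one, metis unit_apply(4) zero_neq_one,
      metis unit_apply(1,3) zero_neq_one, metis unit_apply(1,3) zero_neq_one)

lemma supported_subset_span_units:
  assumes "finite S"
  shows "supported S \<subseteq> spinor.span (unit_fst ` S \<union> unit_snd ` S)"
  using assms
proof (induction S rule: finite_induct)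
  case empty
  then show ?case
    by (auto simp: supported_def prod_eq_iff fun_eq_iff)
next
  case (insert p S)
  let ?U = "unit_fst ` insert p S \<union> unit_snd ` insert p S"
  show ?case
  proof
    fix f assume f: "f \<in> supported (insert p S)"
    define g where "g = ((fst f)(p := 0), (snd f)(p := 0))"
    have "g \<in> supported S"
      using f by (simp add: g_def supported_def)
    then have "g \<in> spinor.span ?U"
      using insert.IH spinor.span_mono[of "unit_fst ` S \<union> unit_snd ` S" ?U] by blast
    then have "g + scaleS (fst f p) (unit_fst p) + scaleS (snd f p) (unit_snd p) \<in> spinor.span ?U"
      by (simp add: spinor.span_add spinor.span_scale spinor.span_base)
    moreover have "g + scaleS (fst f p) (unit_fst p) + scaleS (snd f p) (unit_snd p) = f"
      by (simp add: g_def prod_eq_iff fun_eq_iff)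
    ultimately show "f \<in> spinor.span ?U"
      by simp
  qed
qed

lemma independent_units: "spinor.independent (unit_fst ` S \<union> unit_snd ` S)"
proof (rule spinor.independent_if_separated)
  fix b assume "b \<in> unit_fst ` S \<union> unit_snd ` S"
  then consider p where "b = unit_fst p" | p where "b = unit_snd p"
    by blast
  then show "\<exists>W. spinor.subspace W \<and> unit_fst ` S \<union> unit_snd ` S - {b} \<subseteq> W \<and> b \<notin> W"
  proof cases
    case 1
    then have "unit_fst ` S \<union> unit_snd ` S - {b} \<subseteq> {f. fst f p = 0}" "b \<notin> {f. fst f p = 0}"
      by auto
    moreover have "spinor.subspace {f. fst f p = 0}"
      by (simp add: spinor.subspace_def)
    ultimately show ?thesis
      by blast
  next
    case 2
    then have "unit_fst ` S \<union> unit_snd ` S - {b} \<subseteq> {f. snd f p = 0}" "b \<notin> {f. snd f p = 0}"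
      by auto
    moreover have "spinor.subspace {f. snd f p = 0}"
      by (simp add: spinor.subspace_def)
    ultimately show ?thesis
      by blast
  qed
qed

lemma card_units:
  assumes "finite S"
  shows "card (unit_fst ` S \<union> unit_snd ` S) = 2 * card S"
proof -
  have "unit_fst ` S \<inter> unit_snd ` S = {}"
    by auto
  with assms show ?thesis
    by (simp add: card_Un_disjoint card_image inj_on_def)
qed

lemma dim_supported:
  assumes "finite S"
  shows "spinor.dim (supported S) = 2 * card S"
proof -
  have "unit_fst ` S \<union> unit_snd ` S \<subseteq> supported S"
    by (auto simp: supported_def)
  with assms show ?thesis
    using spinor.dim_unique[OF _ supported_subset_span_units independent_units] card_units by simp
qed

definition restrict_spinor :: "mexp set \<Rightarrow> cpoly \<times> cpoly \<Rightarrow> cpoly \<times> cpoly" where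
  "restrict_spinor S f = ((\<lambda>p. if p \<in> S then fst f p else 0), (\<lambda>p. if p \<in> S then snd f p else 0))"

lemma linear_restrict_spinor: "Vector_Spaces.linear scaleS scaleS (restrict_spinor S)"
  unfolding Vector_Spaces.linear_def module_hom_def module_hom_axioms_def
  by (auto simp: spinor.vector_space_axioms spinor.module_axioms restrict_spinor_def prod_eq_iff fun_eq_iff)

section \<open>The Dirac--Dunkl operator in coefficients\<close>

definition dirac_fst :: "(axis \<Rightarrow> real) \<Rightarrow> cpoly \<times> cpoly \<Rightarrow> cpoly" where
  "dirac_fst k f r =
     dunkl_coeff k X1 r * snd f (raise X1 r) - \<i> * dunkl_coeff k X2 r * snd f (raise X2 r)
     + dunkl_coeff k X3 r * fst f (raise X3 r)"

definition dirac_snd :: "(axis \<Rightarrow> real) \<Rightarrow> cpoly \<times> cpoly \<Rightarrow> cpoly" where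
  "dirac_snd k f r =
     dunkl_coeff k X1 r * fst f (raise X1 r) + \<i> * dunkl_coeff k X2 r * fst f (raise X2 r)
     - dunkl_coeff k X3 r * snd f (raise X3 r)"

lemma dirac_dunkl_eq:
  "dirac_dunkl k1 k2 k3 f = (dirac_fst (multiplicity_fn k1 k2 k3) f, dirac_snd (multiplicity_fn k1 k2 k3) f)"
  by (auto simp: dirac_dunkl_def addS_def pauli1_def pauli2_def pauli3_def dunkl1_def dunkl2_def
      dunkl3_def dirac_fst_def dirac_snd_def dunkl_coeff_def dunkl_factor_def fun_eq_iff algebra_simps)

definition monogenic_space :: "(axis \<Rightarrow> real) \<Rightarrow> nat \<Rightarrow> (cpoly \<times> cpoly) set" where
  "monogenic_space k n = {f \<in> supported {r. mdegree r = n}. dirac_fst k f = 0 \<and> dirac_snd k f = 0}"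

lemma monogenics_eq: "monogenics k1 k2 k3 n = monogenic_space (multiplicity_fn k1 k2 k3) n"
proof -
  have "homog n p \<longleftrightarrow> (\<forall>r. mdegree r \<noteq> n \<longrightarrow> p r = 0)" for p :: cpoly
    by (auto simp: homog_def)
  then show ?thesis
    by (auto simp: monogenics_def monogenic_space_def supported_def dirac_dunkl_eq zero_fun_def)
qed

lemma dirac_add:
  "dirac_fst k (f + g) = dirac_fst k f + dirac_fst k g"
  "dirac_snd k (f + g) = dirac_snd k f + dirac_snd k g"
  by (simp_all add: dirac_fst_def dirac_snd_def fun_eq_iff algebra_simps)

lemma dirac_scaleS:
  "dirac_fst k (scaleS c f) = (\<lambda>r. c * dirac_fst k f r)"
  "dirac_snd k (scaleS c f) = (\<lambda>r. c * dirac_snd k f r)"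
  by (simp_all add: dirac_fst_def dirac_snd_def fun_eq_iff algebra_simps)

lemma subspace_monogenic_space: "spinor.subspace (monogenic_space k n)"
  using subspace_supported[of "{r. mdegree r = n}"]
  by (auto simp: spinor.subspace_def monogenic_space_def dirac_add dirac_scaleS)
    (auto simp: dirac_fst_def dirac_snd_def)

lemma dirac_cong:
  assumes "\<And>j. fst g (raise j r) = fst f (raise j r) \<and> snd g (raise j r) = snd f (raise j r)"
  shows "dirac_fst k g r = dirac_fst k f r" "dirac_snd k g r = dirac_snd k f r"
  by (simp_all add: dirac_fst_def dirac_snd_def assms)

lemma dirac_eq_0_off_degree:
  assumes "f \<in> supported {r. mdegree r = n}" "mdegree r + 1 \<noteq> n"
  shows "dirac_fst k f r = 0" "dirac_snd k f r = 0"
  using assms supportedD[OF assms(1), of "raise _ r"] by (simp_all add: dirac_fst_def dirac_snd_def)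

(* The coefficient fst f (raise d r) occurs only in pivot_eq_fst d, with factor
   pauli_fst d * dunkl_coeff k d r (a nonzero entry of the Pauli matrix sigma_d); likewise
   snd f (raise d r) occurs only in pivot_eq_snd d. *)
fun pauli_fst :: "axis \<Rightarrow> complex" where
  "pauli_fst X1 = 1"
| "pauli_fst X2 = \<i>"
| "pauli_fst X3 = 1"

fun pauli_snd :: "axis \<Rightarrow> complex" where
  "pauli_snd X1 = 1"
| "pauli_snd X2 = - \<i>"
| "pauli_snd X3 = - 1"

lemma pauli_nonzero [simp]: "pauli_fst d \<noteq> 0" "pauli_snd d \<noteq> 0"
  by (cases d; simp)+

definition pivot_eq_fst :: "axis \<Rightarrow> (axis \<Rightarrow> real) \<Rightarrow> cpoly \<times> cpoly \<Rightarrow> cpoly" where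
  "pivot_eq_fst d k = (if d = X3 then dirac_fst k else dirac_snd k)"

definition pivot_eq_snd :: "axis \<Rightarrow> (axis \<Rightarrow> real) \<Rightarrow> cpoly \<times> cpoly \<Rightarrow> cpoly" where
  "pivot_eq_snd d k = (if d = X3 then dirac_snd k else dirac_fst k)"

lemma pivot_eqs_eq_0_iff:
  "pivot_eq_fst d k f r = 0 \<and> pivot_eq_snd d k f r = 0 \<longleftrightarrow> dirac_fst k f r = 0 \<and> dirac_snd k f r = 0"
  by (auto simp: pivot_eq_fst_def pivot_eq_snd_def)

lemma pivot_eqs_affine:
  assumes "\<And>j. j \<noteq> d \<Longrightarrow> fst g (raise j r) = fst f (raise j r) \<and> snd g (raise j r) = snd f (raise j r)"
  shows "pivot_eq_fst d k g r
           = pivot_eq_fst d k f r + pauli_fst d * dunkl_coeff k d r * (fst g (raise d r) - fst f (raise d r))"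
    and "pivot_eq_snd d k g r
           = pivot_eq_snd d k f r + pauli_snd d * dunkl_coeff k d r * (snd g (raise d r) - snd f (raise d r))"
  using assms[of X1] assms[of X2] assms[of X3]
  by (cases d; simp add: pivot_eq_fst_def pivot_eq_snd_def dirac_fst_def dirac_snd_def algebra_simps)+

section \<open>Triangular pivot systems\<close>

(* The rows are the monomials r of degree n - 1, each carrying the two equations of D f at x^r,
   which involve the coefficients at raise j r only.  Since a row meets the pivots of other rows
   only in lower layers, solving the rows in order of increasing layer never disturbs a row
   already solved. *)
locale pivot_system =
  fixes k :: "axis \<Rightarrow> real" and n :: nat and dir :: "mexp \<Rightarrow> axis" and layer :: "mexp \<Rightarrow> nat"
  assumes pivot_coeff_nonzero: "mdegree r + 1 = n \<Longrightarrow> dunkl_coeff k (dir r) r \<noteq> 0"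
    and layer_less:
      "\<lbrakk>mdegree r + 1 = n; mdegree r' + 1 = n; raise j r = raise (dir r') r'; r \<noteq> r'\<rbrakk>
         \<Longrightarrow> layer r' < layer r"
begin

abbreviation rows :: "mexp set" where
  "rows \<equiv> {r. mdegree r + 1 = n}"

definition pivot :: "mexp \<Rightarrow> mexp" where
  "pivot r = raise (dir r) r"

definition free :: "mexp set" where
  "free = {p. mdegree p = n} - pivot ` rows"

lemma inj_on_pivot: "inj_on pivot rows"
proof (rule inj_onI, rule ccontr)
  fix r r' assume "r \<in> rows" "r' \<in> rows" "pivot r = pivot r'" "r \<noteq> r'"
  then have "layer r' < layer r" "layer r < layer r'"
    using layer_less[of r r' "dir r"] layer_less[of r' r "dir r'"] by (auto simp: pivot_def)
  then show False
    by simp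
qed

lemma finite_rows: "finite rows"
  using finite_mdegree_eq[of "n - 1"] by (rule finite_subset[rotated]) auto

lemma card_free: "card free = n + 1"
proof -
  have "pivot ` rows \<subseteq> {p. mdegree p = n}"
    by (auto simp: pivot_def)
  then have "card free = card {p. mdegree p = n} - card (pivot ` rows)"
    unfolding free_def using finite_rows by (intro card_Diff_subset) auto
  then show ?thesis
    using card_mdegree_eq[of n] card_image[OF inj_on_pivot] by simp
qed

lemma raise_notin_freeE:
  assumes "r \<in> rows" "raise j r \<notin> free"
  obtains r' where "r' \<in> rows" "raise j r = pivot r'"
  using assms by (auto simp: free_def)

definition solve_row :: "cpoly \<times> cpoly \<Rightarrow> mexp \<Rightarrow> cpoly \<times> cpoly" where
  "solve_row f r =
     (let p = pivot r; d = dir r; c = dunkl_coeff k d r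
      in ((fst f)(p := fst f p - pivot_eq_fst d k f r / (pauli_fst d * c)),
          (snd f)(p := snd f p - pivot_eq_snd d k f r / (pauli_snd d * c))))"

lemma solve_row_apply:
  "p \<noteq> pivot r \<Longrightarrow> fst (solve_row f r) p = fst f p \<and> snd (solve_row f r) p = snd f p"
  by (simp add: solve_row_def Let_def)

lemma solve_row_solves:
  assumes "r \<in> rows"
  shows "dirac_fst k (solve_row f r) r = 0 \<and> dirac_snd k (solve_row f r) r = 0"
proof -
  define d where "d = dir r"
  let ?g = "solve_row f r"
  have "dunkl_coeff k d r \<noteq> 0"
    using pivot_coeff_nonzero assms by (simp add: d_def)
  have "raise j r \<noteq> pivot r" if "j \<noteq> d" for j
    using that raise_inj[of j r d r] by (auto simp: pivot_def d_def)
  then have "fst ?g (raise j r) = fst f (raise j r) \<and> snd ?g (raise j r) = snd f (raise j r)"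
    if "j \<noteq> d" for j
    using that solve_row_apply by blast
  note affine = pivot_eqs_affine[of d ?g r f k, OF this]
  have "fst ?g (raise d r) - fst f (raise d r) = - pivot_eq_fst d k f r / (pauli_fst d * dunkl_coeff k d r)"
    "snd ?g (raise d r) - snd f (raise d r) = - pivot_eq_snd d k f r / (pauli_snd d * dunkl_coeff k d r)"
    by (simp_all add: solve_row_def Let_def pivot_def d_def)
  with affine \<open>dunkl_coeff k d r \<noteq> 0\<close> have "pivot_eq_fst d k ?g r = 0 \<and> pivot_eq_snd d k ?g r = 0"
    by simp
  then show ?thesis
    by (simp add: pivot_eqs_eq_0_iff)
qed

lemma solve_row_keeps_lower_rows:
  assumes "r \<in> rows" "y \<in> rows" "layer y \<le> layer r" "y \<noteq> r"
  shows "dirac_fst k (solve_row f r) y = dirac_fst k f y" "dirac_snd k (solve_row f r) y = dirac_snd k f y"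
proof -
  have "raise j y \<noteq> pivot r" for j
    using layer_less[of y r j] assms by (auto simp: pivot_def)
  then have "fst (solve_row f r) (raise j y) = fst f (raise j y) \<and> snd (solve_row f r) (raise j y) = snd f (raise j y)"
    for j
    using solve_row_apply by blast
  then show "dirac_fst k (solve_row f r) y = dirac_fst k f y" "dirac_snd k (solve_row f r) y = dirac_snd k f y"
    by (rule dirac_cong)+
qed

lemma solve_row_supported:
  assumes "f \<in> supported {p. mdegree p = n}" "r \<in> rows"
  shows "solve_row f r \<in> supported {p. mdegree p = n}"
  unfolding supported_def
proof (intro CollectI allI impI)
  fix p assume "p \<notin> {p. mdegree p = n}"
  moreover have "mdegree (pivot r) = n"
    using assms(2) by (simp add: pivot_def)
  ultimately show "fst (solve_row f r) p = 0 \<and> snd (solve_row f r) p = 0"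
    using solve_row_apply[of p r f] supportedD[OF assms(1)] by auto
qed

lemma solve_row_keeps_free:
  assumes "r \<in> rows" "p \<in> free"
  shows "fst (solve_row f r) p = fst f p \<and> snd (solve_row f r) p = snd f p"
proof -
  from assms have "p \<noteq> pivot r"
    unfolding free_def by blast
  then show ?thesis
    by (rule solve_row_apply)
qed

lemma ex_solution_on_rows:
  assumes "w \<in> supported free" "R \<subseteq> rows"
  shows "\<exists>f \<in> supported {p. mdegree p = n}. (\<forall>p \<in> free. fst f p = fst w p \<and> snd f p = snd w p)
           \<and> (\<forall>y \<in> R. dirac_fst k f y = 0 \<and> dirac_snd k f y = 0)"
proof -
  have "finite R"
    using assms(2) finite_rows by (rule finite_subset)
  then show ?thesis
    using assms(2)
  proof (induction R rule: finite_ranking_induct[where f = layer])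
    case empty
    have "supported free \<subseteq> supported {p. mdegree p = n}"
      by (auto simp: supported_def free_def)
    with assms(1) show ?case
      by blast
  next
    case (insert r R)
    then obtain f where f: "f \<in> supported {p. mdegree p = n}"
      "\<forall>p \<in> free. fst f p = fst w p \<and> snd f p = snd w p"
      "\<forall>y \<in> R. dirac_fst k f y = 0 \<and> dirac_snd k f y = 0"
      by auto
    have r: "r \<in> rows"
      using insert.prems by simp
    have "dirac_fst k (solve_row f r) y = 0 \<and> dirac_snd k (solve_row f r) y = 0"
      if "y \<in> insert r R" for y
    proof (cases "y = r")
      case True
      then show ?thesis
        using solve_row_solves[OF r, of f] by simp
    next
      case False
      with that have "y \<in> R"
        by simp
      moreover from this have "y \<in> rows" "layer y \<le> layer r"
        using insert.prems insert.hyps(2) by auto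
      ultimately show ?thesis
        using solve_row_keeps_lower_rows[OF r _ _ False, of f] f(3) by simp
    qed
    moreover have "\<forall>p \<in> free. fst (solve_row f r) p = fst w p \<and> snd (solve_row f r) p = snd w p"
      using f(2) by (simp add: solve_row_keeps_free[OF r])
    ultimately show ?case
      using solve_row_supported[OF f(1) r] by blast
  qed
qed

lemma ex_monogenic_extension:
  assumes "w \<in> supported free"
  shows "\<exists>f \<in> monogenic_space k n. \<forall>p \<in> free. fst f p = fst w p \<and> snd f p = snd w p"
proof -
  obtain f where f: "f \<in> supported {p. mdegree p = n}"
    "\<forall>p \<in> free. fst f p = fst w p \<and> snd f p = snd w p"
    "\<forall>y \<in> rows. dirac_fst k f y = 0 \<and> dirac_snd k f y = 0"
    using ex_solution_on_rows[OF assms order_refl] by blast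
  then have "dirac_fst k f r = 0 \<and> dirac_snd k f r = 0" for r
    using f(3) dirac_eq_0_off_degree[OF f(1), of r k] by (cases "r \<in> rows") (blast, simp)
  then have "dirac_fst k f = 0 \<and> dirac_snd k f = 0"
    by (simp add: fun_eq_iff)
  with f(1) have "f \<in> monogenic_space k n"
    by (simp add: monogenic_space_def)
  with f(2) show ?thesis
    by blast
qed

lemma monogenic_vanishes_at_pivots:
  assumes f: "f \<in> monogenic_space k n" and vanish: "\<forall>p \<in> free. fst f p = 0 \<and> snd f p = 0"
    and "r \<in> rows"
  shows "fst f (pivot r) = 0 \<and> snd f (pivot r) = 0"
  using \<open>r \<in> rows\<close>
proof (induction r rule: measure_induct_rule[of layer])
  case (less r)
  define d where "d = dir r"
  have "fst f (raise j r) = fst 0 (raise j r) \<and> snd f (raise j r) = snd 0 (raise j r)" if "j \<noteq> d" for j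
  proof (cases "raise j r \<in> free")
    case False
    with less.prems obtain r' where r': "r' \<in> rows" "raise j r = pivot r'"
      by (rule raise_notin_freeE)
    moreover have "r' \<noteq> r"
      using r'(2) that raise_inj[of j r d r] by (auto simp: pivot_def d_def)
    ultimately have "layer r' < layer r"
      using layer_less[of r r' j] less.prems by (simp add: pivot_def)
    with r' less.IH show ?thesis
      by simp
  qed (use vanish in simp)
  note affine = pivot_eqs_affine[of d f r 0 k, OF this]
  have "dirac_fst k f r = 0 \<and> dirac_snd k f r = 0"
    using f by (simp add: monogenic_space_def)
  then have "pivot_eq_fst d k f r = 0 \<and> pivot_eq_snd d k f r = 0"
    by (simp add: pivot_eqs_eq_0_iff)
  moreover have "pivot_eq_fst d k 0 r = 0 \<and> pivot_eq_snd d k 0 r = 0"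
    by (simp add: pivot_eqs_eq_0_iff dirac_fst_def dirac_snd_def)
  moreover have "dunkl_coeff k d r \<noteq> 0"
    using pivot_coeff_nonzero less.prems by (simp add: d_def)
  ultimately show ?case
    using affine by (simp add: pivot_def d_def)
qed

lemma monogenic_eq_0_if_vanishing_on_free:
  assumes f: "f \<in> monogenic_space k n" and vanish: "\<forall>p \<in> free. fst f p = 0 \<and> snd f p = 0"
  shows "f = 0"
proof -
  have "fst f p = 0 \<and> snd f p = 0" for p
  proof (cases "p \<in> free")
    case False
    then consider "mdegree p \<noteq> n" | r where "r \<in> rows" "p = pivot r"
      unfolding free_def by blast
    moreover have "f \<in> supported {p. mdegree p = n}"
      using f by (simp add: monogenic_space_def)
    ultimately show ?thesis
      by cases (simp_all add: supportedD monogenic_vanishes_at_pivots[OF f vanish])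
  qed (use vanish in simp)
  then show "f = 0"
    by (simp add: prod_eq_iff fun_eq_iff)
qed

theorem dim_monogenic_space: "spinor.dim (monogenic_space k n) = 2 * (n + 1)"
proof -
  interpret restrict: Vector_Spaces.linear scaleS scaleS "restrict_spinor free"
    by (rule linear_restrict_spinor)
  have "restrict_spinor free ` monogenic_space k n = supported free"
  proof
    show "restrict_spinor free ` monogenic_space k n \<subseteq> supported free"
      by (auto simp: restrict_spinor_def supported_def)
  next
    show "supported free \<subseteq> restrict_spinor free ` monogenic_space k n"
    proof
      fix w assume w: "w \<in> supported free"
      then obtain f where "f \<in> monogenic_space k n" "\<forall>p \<in> free. fst f p = fst w p \<and> snd f p = snd w p"
        using ex_monogenic_extension by blast
      moreover from this w have "restrict_spinor free f = w"
        by (auto simp: restrict_spinor_def prod_eq_iff fun_eq_iff dest: supportedD)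
      ultimately show "w \<in> restrict_spinor free ` monogenic_space k n"
        by blast
    qed
  qed
  moreover have "inj_on (restrict_spinor free) (spinor.span (monogenic_space k n))"
    unfolding spinor.span_eq_iff[THEN iffD2, OF subspace_monogenic_space]
      restrict.inj_on_iff_eq_0[OF subspace_monogenic_space]
  proof (intro ballI impI)
    fix f assume f: "f \<in> monogenic_space k n" "restrict_spinor free f = 0"
    have "fst f p = 0 \<and> snd f p = 0" if "p \<in> free" for p
      using that arg_cong[OF f(2), of "\<lambda>g. fst g p"] arg_cong[OF f(2), of "\<lambda>g. snd g p"]
      by (simp add: restrict_spinor_def)
    with f(1) show "f = 0"
      by (intro monogenic_eq_0_if_vanishing_on_free) auto
  qed
  moreover have "finite free"
    using finite_mdegree_eq[of n] by (simp add: free_def)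
  ultimately show ?thesis
    using spinor_pair.dim_image_eq_of_inj_on[OF linear_restrict_spinor] dim_supported card_free by metis
qed

end

(* Rows pivoting in x lie above those pivoting in y, which lie above those pivoting in z; inside
   each class the exponent in the pivot direction orders the rows.  Choosing x or y only once the
   exponent has passed its threshold keeps this choice stable when the exponent grows. *)
definition priority_dir :: "(axis \<Rightarrow> enat) \<Rightarrow> axis \<Rightarrow> axis \<Rightarrow> axis \<Rightarrow> mexp \<Rightarrow> axis" where
  "priority_dir t x y z r =
     (if t x \<le> enat (expo x r) then x else if t y \<le> enat (expo y r) then y else z)"

definition priority_layer :: "(axis \<Rightarrow> enat) \<Rightarrow> nat \<Rightarrow> axis \<Rightarrow> axis \<Rightarrow> axis \<Rightarrow> mexp \<Rightarrow> nat" where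
  "priority_layer t n x y z r =
     (if t x \<le> enat (expo x r) then 2 * (n + 1) + expo x r
      else if t y \<le> enat (expo y r) then n + 1 + expo y r else expo z r)"

lemma priority_layer_less:
  assumes "mdegree r' + 1 = n" "raise j r = raise (priority_dir t x y z r') r'" "r \<noteq> r'"
  shows "priority_layer t n x y z r' < priority_layer t n x y z r"
proof -
  let ?d' = "priority_dir t x y z r'"
  have "j \<noteq> ?d'"
    using assms(2,3) raise_inj by blast
  note expo = expo_of_raise_eq_raise[OF assms(2) this]
  have mono: "t i \<le> enat (expo i r') \<Longrightarrow> expo i r' \<le> expo i r \<Longrightarrow> t i \<le> enat (expo i r)" for i
    by (erule order_trans) simp
  consider (X) "t x \<le> enat (expo x r')"
    | (Y) "\<not> t x \<le> enat (expo x r')" "t y \<le> enat (expo y r')"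
    | (Z) "\<not> t x \<le> enat (expo x r')" "\<not> t y \<le> enat (expo y r')"
    by blast
  then show ?thesis
  proof cases
    case X
    then have "?d' = x"
      by (simp add: priority_dir_def)
    with X expo(1) mono[of x] show ?thesis
      by (simp add: priority_layer_def)
  next
    case Y
    then have "?d' = y" "x \<noteq> y"
      by (auto simp: priority_dir_def)
    moreover have "\<not> t x \<le> enat (expo x r)"
      using Y(1) expo(2)[of x] \<open>?d' = y\<close> \<open>x \<noteq> y\<close> order_trans by fastforce
    ultimately show ?thesis
      using Y expo(1) mono[of y] by (simp add: priority_layer_def)
  next
    case Z
    then have "?d' = z"
      by (simp add: priority_dir_def)
    moreover have "expo z r' < n + 1"
      using expo_le_mdegree[of z r'] assms(1) by simp
    ultimately show ?thesis
      using Z expo(1) by (auto simp: priority_layer_def)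
  qed
qed

lemma priority_pivot_system:
  assumes "\<And>r. \<lbrakk>mdegree r + 1 = n; enat (expo x r) < tpar (k x); enat (expo y r) < tpar (k y)\<rbrakk>
             \<Longrightarrow> tpar (k z) \<noteq> enat (expo z r + 1)"
  shows "pivot_system k n (priority_dir (tpar \<circ> k) x y z) (priority_layer (tpar \<circ> k) n x y z)"
proof
  fix r assume "mdegree r + 1 = n"
  with assms[of r] show "dunkl_coeff k (priority_dir (tpar \<circ> k) x y z r) r \<noteq> 0"
    by (auto simp: priority_dir_def dunkl_coeff_eq_0_iff not_le)
qed (rule priority_layer_less)

theorem theorem1p2:
  fixes k1 k2 k3 :: real and n :: nat
  assumes "enat n < max (tpar k1) (max (tpar k2) (tpar k3))
           \<or> enat (n + 1) \<ge> tpar k1 + tpar k2 + tpar k3"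
  shows "vector_space.dim scaleS (monogenics k1 k2 k3 n) = 2 * (n + 1)"
proof -
  let ?k = "multiplicity_fn k1 k2 k3"
  obtain x y z where "\<And>r. \<lbrakk>mdegree r + 1 = n; enat (expo x r) < tpar (?k x); enat (expo y r) < tpar (?k y)\<rbrakk>
                          \<Longrightarrow> tpar (?k z) \<noteq> enat (expo z r + 1)"
  proof (cases "enat n < max (tpar k1) (max (tpar k2) (tpar k3))")
    case True
    then obtain j where j: "enat n < tpar (?k j)"
      by (metis less_max_iff_disj multiplicity_fn.simps)
    have "tpar (?k j) \<noteq> enat (expo j r + 1)" if "mdegree r + 1 = n" for r
      using j that expo_le_mdegree[of j r] by auto
    then show ?thesis
      by (rule that[of j j j])
  next
    case False
    with assms have "tpar (?k X1) + tpar (?k X2) + tpar (?k X3) \<le> enat (n + 1)"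
      by simp
    then show ?thesis
      using thresholds_not_all_hit[where t = "tpar \<circ> ?k"] by (intro that[of X1 X2 X3]) simp
  qed
  then interpret pivot_system ?k n "priority_dir (tpar \<circ> ?k) x y z" "priority_layer (tpar \<circ> ?k) n x y z"
    by (rule priority_pivot_system)
  show ?thesis
    using dim_monogenic_space by (simp add: monogenics_eq)
qed

end
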